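(* Let $P,Q$ be probability measures on $\mathbb{R}^d$ with $P\ll Q$ and $Q\ll P$, and let $\alpha\in\mathbb{R}\setminus\{0,1\}$. Then $$D_{\alpha}(Q\|P)=\sup_{T:\mathbb{R}^d\to\mathbb{R}}\Big\{\frac{1}{\alpha(1-\alpha)}-\frac{1}{\alpha}E_Q\big[e^{\alpha T}\big]-\frac{1}{1-\alpha}E_P\big[e^{(\alpha-1)T}\big]\Big\},$$ where the supremum is over all measurable $T:\mathbb{R}^d\to\mathbb{R}$ with $E_P[e^{(\alpha-1)T}]<\infty$ and $E_Q[e^{\alpha T}]<\infty$. Equality (attainment of the supremum) holds for $T^*$ satisfying $\frac{dQ}{dP}=e^{-T^*}$.
   Context: The $\alpha$-divergence is $D_{\alpha}(Q\|P)=E_P\Big[\frac{1}{\alpha(\alpha-1)}\Big\{\big(\frac{dQ}{dP}\big)^{1-\alpha}-1\Big\}\Big]$ for $\alpha\in\mathbb{R}\setminus\{0,1\}$. *)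

theory Defs
  imports "HOL-Probability.Probability"
begin

definition dens :: "'a measure \<Rightarrow> 'a measure \<Rightarrow> 'a \<Rightarrow> real" where
  "dens Q P x = enn2real (RN_deriv P Q x)"

text \<open>alpha-divergence D_alpha(Q||P) = E_P[(1/(alpha(alpha-1))) ((dQ/dP)^(1-alpha) - 1)],
  valued in the extended reals: the integrand is integrable when 0 < alpha < 1, and is
  bounded below otherwise, so a non-integrable integrand has expectation +infinity.\<close>
definition alpha_div :: "real \<Rightarrow> 'a measure \<Rightarrow> 'a measure \<Rightarrow> ereal" where
  "alpha_div \<alpha> Q P =
     (let f = (\<lambda>x. (1 / (\<alpha> * (\<alpha> - 1))) * (dens Q P x powr (1 - \<alpha>) - 1))
      in if integrable P f then ereal (integral\<^sup>L P f) else \<infinity>)"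

definition admissible :: "real \<Rightarrow> 'a::euclidean_space measure \<Rightarrow> 'a measure \<Rightarrow> ('a \<Rightarrow> real) set" where
  "admissible \<alpha> Q P = {T. T \<in> borel_measurable borel \<and>
      (\<integral>\<^sup>+ x. ennreal (exp ((\<alpha> - 1) * T x)) \<partial>P) < \<infinity> \<and>
      (\<integral>\<^sup>+ x. ennreal (exp (\<alpha> * T x)) \<partial>Q) < \<infinity>}"

definition var_obj :: "real \<Rightarrow> 'a measure \<Rightarrow> 'a measure \<Rightarrow> ('a \<Rightarrow> real) \<Rightarrow> real" where
  "var_obj \<alpha> Q P T = 1 / (\<alpha> * (1 - \<alpha>)) - (1 / \<alpha>) * (\<integral>x. exp (\<alpha> * T x) \<partial>Q)
      - (1 / (1 - \<alpha>)) * (\<integral>x. exp ((\<alpha> - 1) * T x) \<partial>P)"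

end

theory Submission
  imports Defs "HOL-Real_Asymp.Real_Asymp"
begin

(* Write rho = dQ/dP, f(r) = (r^(1-alpha) - 1)/(alpha (alpha - 1)) (alpha_gen) for the convex
   generator of D_alpha, so that D_alpha(Q||P) = E_P[f(rho)], and (var_integrand)
   phi(r, t) = 1/(alpha (1 - alpha)) - r e^(alpha t)/alpha - e^((alpha - 1) t)/(1 - alpha),
   so that the objective of T is E_P[phi(rho, T)] after the change of measure dQ = rho dP.
   Pointwise, f(r) - phi(r, t) = e^((alpha - 1) t) (f(s) - f(1) - f'(1) (s - 1)) with s = r e^t,
   which is nonnegative by convexity of f and vanishes at t = -ln r.  Hence no objective exceeds
   D_alpha, and T* = -ln rho attains it whenever f(rho) is P-integrable.  Otherwise alpha lies
   outside (0, 1), f(rho) is bounded below, and Fatou's lemma applied to truncations of T* that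
   are bounded on the side where the exponentials blow up shows that the supremum is infinite. *)

definition alpha_gen :: "real \<Rightarrow> real \<Rightarrow> real" where
  "alpha_gen a r = 1 / (a * (a - 1)) * (r powr (1 - a) - 1)"

definition var_integrand :: "real \<Rightarrow> real \<Rightarrow> real \<Rightarrow> real" where
  "var_integrand a r t =
     1 / (a * (1 - a)) - (1 / a) * (r * exp (a * t)) - (1 / (1 - a)) * exp ((a - 1) * t)"

lemma has_real_derivative_alpha_gen:
  assumes "a \<noteq> 0" "a \<noteq> 1" "0 < r"
  shows "(alpha_gen a has_real_derivative - (r powr (- a)) / a) (at r)"
proof -
  have "(alpha_gen a has_real_derivative 1 / (a * (a - 1)) * ((1 - a) * r powr (1 - a - 1) - 0)) (at r)"
    unfolding alpha_gen_def
    by (intro DERIV_cmult DERIV_diff has_real_derivative_powr DERIV_const assms(3))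
  moreover have "1 / (a * (a - 1)) * ((1 - a) * r powr (1 - a - 1) - 0) = - (r powr (- a)) / a"
    using assms(1,2) by (simp add: field_simps)
  ultimately show ?thesis by simp
qed

lemma convex_on_alpha_gen:
  assumes "a \<noteq> 0" "a \<noteq> 1"
  shows "convex_on {0<..} (alpha_gen a)"
proof (rule f''_ge0_imp_convex)
  show "DERIV (\<lambda>r. - (r powr (- a)) / a) r :> r powr (- a - 1)" if "r \<in> {0<..}" for r
  proof -
    have "DERIV (\<lambda>r. - (r powr (- a)) / a) r :> - (- a * r powr (- a - 1)) / a"
      using that by (intro DERIV_cdivide DERIV_minus has_real_derivative_powr) simp
    then show ?thesis using assms(1) by simp
  qed
qed (use assms has_real_derivative_alpha_gen in auto)

lemma alpha_gen_above_tangent: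
  assumes "a \<noteq> 0" "a \<noteq> 1" "0 < s"
  shows "(1 - s) / a \<le> alpha_gen a s"
proof -
  have "- (1 powr (- a)) / a * (s - 1) \<le> alpha_gen a s - alpha_gen a 1"
    using assms has_real_derivative_alpha_gen[OF assms(1,2), of 1]
    by (intro convex_on_imp_above_tangent[OF convex_on_alpha_gen])
      (auto simp: has_field_derivative_at_within interior_open)
  moreover have "- (1 powr (- a)) / a * (s - 1) = (1 - s) / a"
    using assms(1) by (simp add: field_simps)
  ultimately show ?thesis by (simp add: alpha_gen_def)
qed

lemma alpha_coeffs:
  fixes a :: real
  assumes "a \<noteq> 0" "a \<noteq> 1"
  shows "1 / (a * (1 - a)) = - (1 / (a * (a - 1)))"
    and "1 / a = (a - 1) * (1 / (a * (a - 1)))"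
    and "1 / (1 - a) = - a * (1 / (a * (a - 1)))"
  using assms by (auto simp: field_simps)

lemma alpha_gen_minus_var_integrand:
  assumes "a \<noteq> 0" "a \<noteq> 1" "0 < r"
  shows "alpha_gen a r - var_integrand a r t =
    exp ((a - 1) * t) * (alpha_gen a (r * exp t) - (1 - r * exp t) / a)"
proof -
  define k where "k = 1 / (a * (a - 1))"
  define E where "E = exp ((a - 1) * t)"
  define F where "F = exp ((1 - a) * t)"
  note k = alpha_coeffs[OF assms(1,2), folded k_def]
  have EF: "E * F = 1"
    unfolding E_def F_def by (simp flip: exp_add) (simp add: algebra_simps)
  have exp_at: "exp (a * t) = E * exp t"
    unfolding E_def by (simp flip: exp_add) (simp add: algebra_simps)
  have powr_rt: "(r * exp t) powr (1 - a) = r powr (1 - a) * F"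
    using assms(3) by (simp add: F_def powr_mult exp_powr_real mult.commute)
  have "(1 - r * exp t) / a = (1 - r * exp t) * ((a - 1) * k)"
    by (simp flip: k(2))
  then show ?thesis
    using EF unfolding alpha_gen_def var_integrand_def k_def[symmetric] E_def[symmetric]
      exp_at powr_rt k
    by algebra
qed

lemma var_integrand_le_alpha_gen:
  assumes "a \<noteq> 0" "a \<noteq> 1" "0 < r"
  shows "var_integrand a r t \<le> alpha_gen a r"
proof -
  have "0 \<le> exp ((a - 1) * t) * (alpha_gen a (r * exp t) - (1 - r * exp t) / a)"
    using alpha_gen_above_tangent[OF assms(1,2), of "r * exp t"] assms(3) by simp
  then show ?thesis using alpha_gen_minus_var_integrand[OF assms, of t] by simp
qed

lemma var_integrand_minus_ln:
  assumes "a \<noteq> 0" "a \<noteq> 1" "0 < r"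
  shows "var_integrand a r (- ln r) = alpha_gen a r"
  using alpha_gen_minus_var_integrand[OF assms, of "- ln r"] assms(3)
  by (simp add: exp_minus alpha_gen_def)

lemma var_integrand_lower_bound:
  assumes "0 < a * (a - 1)" "0 \<le> (a - 1) * (1 - r * exp t)"
  shows "- 1 / (a * (a - 1)) \<le> var_integrand a r t"
proof -
  define k where "k = 1 / (a * (a - 1))"
  define E where "E = exp ((a - 1) * t)"
  have "a \<noteq> 0" "a \<noteq> 1" using assms(1) by auto
  note k = alpha_coeffs[OF this, folded k_def]
  have "exp (a * t) = E * exp t"
    unfolding E_def by (simp flip: exp_add) (simp add: algebra_simps)
  then have "var_integrand a r t + k = k * E * ((a - 1) * (1 - r * exp t) + 1)"
    unfolding var_integrand_def E_def[symmetric] k by algebra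
  moreover have "0 < k" "0 < E" using assms(1) by (simp_all add: k_def E_def)
  ultimately have "0 \<le> var_integrand a r t + k" using assms(2) by simp
  then show ?thesis by (simp add: k_def)
qed

lemma eventually_ln_Suc_ge: "\<forall>\<^sub>F n in sequentially. c \<le> ln (real n + 1)"
  by real_asymp

lemma alpha_div_eq:
  "alpha_div a Q P = (if integrable P (\<lambda>x. alpha_gen a (dens Q P x))
     then ereal (\<integral>x. alpha_gen a (dens Q P x) \<partial>P) else \<infinity>)"
  by (simp add: alpha_div_def alpha_gen_def Let_def)

lemma borel_measurable_alpha_gen [measurable (raw)]:
  assumes [measurable]: "f \<in> borel_measurable M"
  shows "(\<lambda>x. alpha_gen a (f x)) \<in> borel_measurable M"
  unfolding alpha_gen_def by measurable

lemma borel_measurable_var_integrand [measurable (raw)]: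
  assumes [measurable]: "f \<in> borel_measurable M" "g \<in> borel_measurable M"
  shows "(\<lambda>x. var_integrand a (f x) (g x)) \<in> borel_measurable M"
  unfolding var_integrand_def by measurable

lemma borel_measurable_dens [measurable]: "dens Q P \<in> borel_measurable P"
  unfolding dens_def by measurable

lemma dens_nonneg: "0 \<le> dens Q P x"
  by (simp add: dens_def)

lemma density_dens:
  assumes "sigma_finite_measure P" "finite_measure Q"
    and "absolutely_continuous P Q" "sets Q = sets P"
  shows "density P (\<lambda>x. ennreal (dens Q P x)) = Q"
proof -
  interpret sigma_finite_measure P by fact
  obtain D where D: "AE x in P. RN_deriv P Q x = ennreal (D x)" "\<And>x. 0 \<le> D x"
    using real_RN_deriv[OF assms(2-4)] by metis
  have "AE x in P. ennreal (dens Q P x) = RN_deriv P Q x"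
    using D(1) by eventually_elim (simp add: dens_def D(2))
  then have "density P (\<lambda>x. ennreal (dens Q P x)) = density P (RN_deriv P Q)"
    by (intro density_cong) auto
  then show ?thesis using density_RN_deriv[OF assms(3,4)] by simp
qed

lemma AE_dens_pos:
  assumes "sigma_finite_measure P" "finite_measure Q"
    and "absolutely_continuous P Q" "absolutely_continuous Q P" "sets Q = sets P"
  shows "AE x in P. 0 < dens Q P x"
proof -
  interpret sigma_finite_measure P by fact
  obtain D where D: "AE x in P. RN_deriv P Q x = ennreal (D x)" "AE x in Q. 0 < D x" "\<And>x. 0 \<le> D x"
    using real_RN_deriv[OF assms(2,3,5)] by metis
  have "AE x in P. 0 < D x"
    using absolutely_continuous_AE[OF assms(5)[symmetric] assms(4) D(2)] .
  with D(1) show ?thesis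
    by eventually_elim (simp add: dens_def D(3))
qed

lemma integrable_if_eventually_eq_bounded:
  fixes f :: "'a \<Rightarrow> real" and g :: "nat \<Rightarrow> 'a \<Rightarrow> real"
  assumes "finite_measure M" "f \<in> borel_measurable M"
    and int: "\<And>n. integrable M (g n)" and lower: "\<And>n. AE x in M. c \<le> g n x"
    and upper: "\<And>n. integral\<^sup>L M (g n) \<le> B"
    and lim: "AE x in M. \<forall>\<^sub>F n in sequentially. g n x = f x"
  shows "integrable M f"
proof -
  interpret finite_measure M by fact
  define K where "K = B - measure M (space M) * c"
  have [measurable]: "g n \<in> borel_measurable M" for n using int by auto
  have bounded: "(\<integral>\<^sup>+x. ennreal (g n x - c) \<partial>M) \<le> ennreal K" for n
  proof -
    have "(\<integral>\<^sup>+x. ennreal (g n x - c) \<partial>M) = ennreal (integral\<^sup>L M (g n) - measure M (space M) * c)"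
      using lower[of n] int[of n]
      by (subst nn_integral_eq_integral) (auto elim: AE_mp)
    then show ?thesis using upper[of n] by (simp add: K_def ennreal_leI)
  qed
  have "AE x in M. liminf (\<lambda>n. ennreal (g n x - c)) = ennreal (f x - c)"
    using lim
  proof eventually_elim
    case (elim x)
    then have "\<forall>\<^sub>F n in sequentially. ennreal (g n x - c) = ennreal (f x - c)"
      by eventually_elim simp
    then show ?case by (intro lim_imp_Liminf tendsto_eventually) simp_all
  qed
  then have "(\<integral>\<^sup>+x. ennreal (f x - c) \<partial>M) = (\<integral>\<^sup>+x. liminf (\<lambda>n. ennreal (g n x - c)) \<partial>M)"
    by (intro nn_integral_cong_AE) (auto elim: AE_mp)
  also have "\<dots> \<le> liminf (\<lambda>n. \<integral>\<^sup>+x. ennreal (g n x - c) \<partial>M)"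
    by (intro nn_integral_liminf) measurable
  also have "\<dots> \<le> ennreal K"
    using bounded by (intro Liminf_le) auto
  finally have "integrable M (\<lambda>x. f x - c)"
  proof (intro integrableI_nonneg)
    have "AE x in M. \<forall>n. c \<le> g n x" using lower by (simp add: AE_all_countable)
    with lim show "AE x in M. 0 \<le> f x - c"
    proof eventually_elim
      case (elim x)
      then obtain N where "\<forall>n\<ge>N. g n x = f x" unfolding eventually_sequentially by blast
      with elim(2)[rule_format, of N] show ?case by simp
    qed
  qed (use assms(2) in \<open>auto simp: top.not_eq_extremum le_less_trans\<close>)
  from Bochner_Integration.integrable_add[OF this integrable_const[of c]] show ?thesis by simp
qed

locale mutually_ac_prob_spaces = P: prob_space P + Q: prob_space Q
  for P Q :: "'a measure" +
  assumes sets_Q: "sets Q = sets P"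
    and Q_ll_P: "absolutely_continuous P Q"
    and P_ll_Q: "absolutely_continuous Q P"
begin

definition test_functions :: "real \<Rightarrow> ('a \<Rightarrow> real) set" where
  "test_functions a = {T \<in> borel_measurable P.
     integrable P (\<lambda>x. exp ((a - 1) * T x)) \<and> integrable Q (\<lambda>x. exp (a * T x))}"

lemmas AE_dens_gt_0 = AE_dens_pos[OF P.sigma_finite_measure Q.finite_measure Q_ll_P P_ll_Q sets_Q]

lemmas density_dens_eq_Q = density_dens[OF P.sigma_finite_measure Q.finite_measure Q_ll_P sets_Q]

lemma integrable_Q_iff:
  assumes "g \<in> borel_measurable P"
  shows "integrable Q g \<longleftrightarrow> integrable P (\<lambda>x. dens Q P x * g x)"
  using integrable_density[OF assms borel_measurable_dens AE_I2[OF dens_nonneg[of Q P]]]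
  by (simp add: density_dens_eq_Q)

lemma integral_Q_eq:
  assumes "g \<in> borel_measurable P"
  shows "integral\<^sup>L Q g = (\<integral>x. dens Q P x * g x \<partial>P)"
  using integral_density[OF assms borel_measurable_dens AE_I2[OF dens_nonneg[of Q P]]]
  by (simp add: density_dens_eq_Q)

lemma test_functionsI:
  assumes [measurable]: "T \<in> borel_measurable P"
    and "\<And>x. (a - 1) * T x \<le> K" "\<And>x. a * T x \<le> K"
  shows "T \<in> test_functions a"
proof -
  have [measurable]: "T \<in> borel_measurable Q" using assms(1) sets_Q by simp
  have "integrable P (\<lambda>x. exp ((a - 1) * T x))"
    using assms(2) by (intro P.integrable_const_bound[where B = "exp K"]) auto
  moreover have "integrable Q (\<lambda>x. exp (a * T x))"
    using assms(3) by (intro Q.integrable_const_bound[where B = "exp K"]) auto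
  ultimately show ?thesis using assms(1) by (simp add: test_functions_def)
qed

context
  fixes a :: real
  assumes a_ne_0: "a \<noteq> 0" and a_ne_1: "a \<noteq> 1"
begin

lemma var_obj_eq_integral:
  assumes "T \<in> test_functions a"
  shows "integrable P (\<lambda>x. var_integrand a (dens Q P x) (T x))"
    and "var_obj a Q P T = (\<integral>x. var_integrand a (dens Q P x) (T x) \<partial>P)"
proof -
  have [measurable]: "T \<in> borel_measurable P"
    and int_P: "integrable P (\<lambda>x. exp ((a - 1) * T x))"
    and int_Q: "integrable Q (\<lambda>x. exp (a * T x))"
    using assms by (auto simp: test_functions_def)
  have int_dens: "integrable P (\<lambda>x. dens Q P x * exp (a * T x))"
    using int_Q integrable_Q_iff[of "\<lambda>x. exp (a * T x)"] by simp
  have "(\<lambda>x. var_integrand a (dens Q P x) (T x)) = (\<lambda>x. 1 / (a * (1 - a))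
      - (1 / a) * (dens Q P x * exp (a * T x)) - (1 / (1 - a)) * exp ((a - 1) * T x))"
    by (simp add: var_integrand_def)
  moreover have "(\<integral>x. exp (a * T x) \<partial>Q) = (\<integral>x. dens Q P x * exp (a * T x) \<partial>P)"
    by (simp add: integral_Q_eq)
  ultimately show "integrable P (\<lambda>x. var_integrand a (dens Q P x) (T x))"
    and "var_obj a Q P T = (\<integral>x. var_integrand a (dens Q P x) (T x) \<partial>P)"
    using int_P int_dens by (simp_all add: var_obj_def P.prob_space)
qed

lemma var_obj_le_alpha_div:
  assumes "T \<in> test_functions a"
  shows "ereal (var_obj a Q P T) \<le> alpha_div a Q P"
proof (cases "integrable P (\<lambda>x. alpha_gen a (dens Q P x))")
  case True
  have "AE x in P. var_integrand a (dens Q P x) (T x) \<le> alpha_gen a (dens Q P x)"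
    using AE_dens_gt_0 by eventually_elim (rule var_integrand_le_alpha_gen[OF a_ne_0 a_ne_1])
  then have "(\<integral>x. var_integrand a (dens Q P x) (T x) \<partial>P) \<le> (\<integral>x. alpha_gen a (dens Q P x) \<partial>P)"
    by (intro integral_mono_AE var_obj_eq_integral(1)[OF assms] True)
  then show ?thesis using True by (simp add: alpha_div_eq var_obj_eq_integral(2)[OF assms])
qed (simp add: alpha_div_eq)

lemma alpha_div_eq_var_obj:
  assumes "T \<in> test_functions a" and "AE x in P. dens Q P x = exp (- T x)"
  shows "alpha_div a Q P = ereal (var_obj a Q P T)"
proof -
  have [measurable]: "T \<in> borel_measurable P" using assms(1) by (simp add: test_functions_def)
  have eq: "AE x in P. var_integrand a (dens Q P x) (T x) = alpha_gen a (dens Q P x)"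
    using assms(2)
  proof eventually_elim
    case (elim x)
    then have "0 < dens Q P x" and "T x = - ln (dens Q P x)" by simp_all
    then show ?case using var_integrand_minus_ln[OF a_ne_0 a_ne_1] by simp
  qed
  have "integrable P (\<lambda>x. alpha_gen a (dens Q P x))"
    using var_obj_eq_integral(1)[OF assms(1)] integrable_cong_AE[OF _ _ eq] by simp
  moreover have "(\<integral>x. var_integrand a (dens Q P x) (T x) \<partial>P) = (\<integral>x. alpha_gen a (dens Q P x) \<partial>P)"
    by (rule integral_cong_AE[OF _ _ eq]) measurable
  ultimately show ?thesis by (simp add: alpha_div_eq var_obj_eq_integral(2)[OF assms(1)])
qed

lemma minus_ln_dens_test_function:
  assumes "integrable P (\<lambda>x. alpha_gen a (dens Q P x))"
  shows "(\<lambda>x. - ln (dens Q P x)) \<in> test_functions a"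
proof -
  have "integrable P (\<lambda>x. a * (a - 1) * alpha_gen a (dens Q P x) + 1)"
    using assms by simp
  moreover have "a * (a - 1) * alpha_gen a r + 1 = r powr (1 - a)" for r
    using a_ne_0 a_ne_1 by (simp add: alpha_gen_def)
  ultimately have int_powr: "integrable P (\<lambda>x. dens Q P x powr (1 - a))" by simp
  have eq_P: "AE x in P. dens Q P x powr (1 - a) = exp ((a - 1) * - ln (dens Q P x))"
    using AE_dens_gt_0 by eventually_elim (simp add: powr_def algebra_simps)
  have eq_Q: "AE x in P. dens Q P x powr (1 - a) = dens Q P x * exp (a * - ln (dens Q P x))"
    using AE_dens_gt_0
  proof eventually_elim
    case (elim x)
    then have "dens Q P x * exp (a * - ln (dens Q P x)) = exp (ln (dens Q P x) + a * - ln (dens Q P x))"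
      by (simp add: exp_diff exp_minus divide_inverse)
    then show ?case using elim by (simp add: powr_def algebra_simps)
  qed
  have "integrable P (\<lambda>x. exp ((a - 1) * - ln (dens Q P x)))"
    by (rule integrable_cong_AE_imp[OF int_powr _ eq_P]) measurable
  moreover have "integrable P (\<lambda>x. dens Q P x * exp (a * - ln (dens Q P x)))"
    by (rule integrable_cong_AE_imp[OF int_powr _ eq_Q]) measurable
  ultimately show ?thesis by (simp add: test_functions_def integrable_Q_iff)
qed

lemma integrable_alpha_gen_dens:
  assumes "0 < a" "a < 1"
  shows "integrable P (\<lambda>x. alpha_gen a (dens Q P x))"
proof -
  have "integrable P (\<lambda>x. dens Q P x * 1)"
    using integrable_Q_iff[of "\<lambda>_. 1"] by simp
  then have "integrable P (\<lambda>x. dens Q P x powr (1 - a))"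
  proof (rule Bochner_Integration.integrable_bound[OF Bochner_Integration.integrable_add[OF P.integrable_const]])
    show "AE x in P. norm (dens Q P x powr (1 - a)) \<le> norm (1 + dens Q P x * 1)"
    proof (intro AE_I2)
      fix x
      have "0 \<le> dens Q P x" by (rule dens_nonneg)
      moreover have "dens Q P x powr (1 - a) \<le> 1 + dens Q P x"
      proof (cases "dens Q P x \<le> 1")
        case True
        then have "dens Q P x powr (1 - a) \<le> 1" using assms by (simp add: powr_le1 dens_nonneg)
        then show ?thesis using \<open>0 \<le> dens Q P x\<close> by simp
      next
        case False
        then have "dens Q P x powr (1 - a) \<le> dens Q P x powr 1"
          using assms by (intro powr_mono) auto
        then show ?thesis using False by simp
      qed
      ultimately show "norm (dens Q P x powr (1 - a)) \<le> norm (1 + dens Q P x * 1)"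
        by simp
    qed
  qed measurable
  then show ?thesis by (simp add: alpha_gen_def)
qed

lemma SUP_var_obj_eq_infinity:
  assumes pos: "0 < a * (a - 1)" and not_int: "\<not> integrable P (\<lambda>x. alpha_gen a (dens Q P x))"
    and tests: "\<And>n. T n \<in> test_functions a"
    and sign: "\<And>n. AE x in P. 0 \<le> (a - 1) * (1 - dens Q P x * exp (T n x))"
    and lim: "AE x in P. \<forall>\<^sub>F n in sequentially. T n x = - ln (dens Q P x)"
  shows "(SUP T\<in>test_functions a. ereal (var_obj a Q P T)) = \<infinity>"
proof (rule ccontr)
  let ?S = "SUP T\<in>test_functions a. ereal (var_obj a Q P T)"
  assume "?S \<noteq> \<infinity>"
  moreover have le: "ereal (var_obj a Q P (T n)) \<le> ?S" for n
    using tests by (rule SUP_upper)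
  ultimately obtain B where "?S = ereal B" by (cases ?S) auto
  with le have B: "var_obj a Q P (T n) \<le> B" for n by simp
  have "integrable P (\<lambda>x. alpha_gen a (dens Q P x))"
  proof (rule integrable_if_eventually_eq_bounded[OF P.finite_measure,
        where g = "\<lambda>n x. var_integrand a (dens Q P x) (T n x)" and c = "- 1 / (a * (a - 1))"])
    show "integrable P (\<lambda>x. var_integrand a (dens Q P x) (T n x))" for n
      by (rule var_obj_eq_integral(1)[OF tests])
    show "AE x in P. - 1 / (a * (a - 1)) \<le> var_integrand a (dens Q P x) (T n x)" for n
      using sign[of n] by eventually_elim (rule var_integrand_lower_bound[OF pos])
    show "(\<integral>x. var_integrand a (dens Q P x) (T n x) \<partial>P) \<le> B" for n
      using B[of n] by (simp add: var_obj_eq_integral(2)[OF tests])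
    show "AE x in P. \<forall>\<^sub>F n in sequentially.
        var_integrand a (dens Q P x) (T n x) = alpha_gen a (dens Q P x)"
      using lim AE_dens_gt_0 by eventually_elim
        (auto elim: eventually_mono simp: var_integrand_minus_ln a_ne_0 a_ne_1)
  qed measurable
  with not_int show False by contradiction
qed

lemma SUP_var_obj_eq_infinity_gt_1:
  assumes "1 < a" and "\<not> integrable P (\<lambda>x. alpha_gen a (dens Q P x))"
  shows "(SUP T\<in>test_functions a. ereal (var_obj a Q P T)) = \<infinity>"
proof (rule SUP_var_obj_eq_infinity[where T = "\<lambda>n x. min (ln (real n + 1)) (- ln (dens Q P x))"])
  show "(\<lambda>x. min (ln (real n + 1)) (- ln (dens Q P x))) \<in> test_functions a" for n
  proof (rule test_functionsI[where K = "a * ln (real n + 1)"])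
    fix x
    have "(a - 1) * min (ln (real n + 1)) (- ln (dens Q P x)) \<le> (a - 1) * ln (real n + 1)"
      using assms(1) by (intro mult_left_mono) auto
    also have "\<dots> \<le> a * ln (real n + 1)" by (simp add: algebra_simps)
    finally show "(a - 1) * min (ln (real n + 1)) (- ln (dens Q P x)) \<le> a * ln (real n + 1)" .
    show "a * min (ln (real n + 1)) (- ln (dens Q P x)) \<le> a * ln (real n + 1)"
      using assms(1) by (intro mult_left_mono) auto
  qed measurable
  show "AE x in P. 0 \<le> (a - 1) * (1 - dens Q P x * exp (min (ln (real n + 1)) (- ln (dens Q P x))))" for n
    using AE_dens_gt_0
  proof eventually_elim
    case (elim x)
    then have "dens Q P x * exp (min (ln (real n + 1)) (- ln (dens Q P x))) \<le> dens Q P x * exp (- ln (dens Q P x))"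
      by (intro mult_left_mono) auto
    with elim assms(1) show ?case by (simp add: exp_minus)
  qed
  show "AE x in P. \<forall>\<^sub>F n in sequentially. min (ln (real n + 1)) (- ln (dens Q P x)) = - ln (dens Q P x)"
  proof (rule AE_I2)
    show "\<forall>\<^sub>F n in sequentially. min (ln (real n + 1)) (- ln (dens Q P x)) = - ln (dens Q P x)" for x
      using eventually_ln_Suc_ge[of "- ln (dens Q P x)"] by eventually_elim simp
  qed
qed (use assms in simp_all)

lemma SUP_var_obj_eq_infinity_lt_0:
  assumes "a < 0" and "\<not> integrable P (\<lambda>x. alpha_gen a (dens Q P x))"
  shows "(SUP T\<in>test_functions a. ereal (var_obj a Q P T)) = \<infinity>"
proof (rule SUP_var_obj_eq_infinity[where T = "\<lambda>n x. max (- ln (real n + 1)) (- ln (dens Q P x))"])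
  show "(\<lambda>x. max (- ln (real n + 1)) (- ln (dens Q P x))) \<in> test_functions a" for n
  proof (rule test_functionsI[where K = "(1 - a) * ln (real n + 1)"])
    fix x
    show "(a - 1) * max (- ln (real n + 1)) (- ln (dens Q P x)) \<le> (1 - a) * ln (real n + 1)"
      using assms(1) mult_left_mono_neg[of "- ln (real n + 1)" "max (- ln (real n + 1)) (- ln (dens Q P x))" "a - 1"]
      by (simp add: algebra_simps)
    have "a * max (- ln (real n + 1)) (- ln (dens Q P x)) \<le> - a * ln (real n + 1)"
      using assms(1) mult_left_mono_neg[of "- ln (real n + 1)" "max (- ln (real n + 1)) (- ln (dens Q P x))" a]
      by simp
    also have "\<dots> \<le> (1 - a) * ln (real n + 1)" by (simp add: algebra_simps)
    finally show "a * max (- ln (real n + 1)) (- ln (dens Q P x)) \<le> (1 - a) * ln (real n + 1)" .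
  qed measurable
  show "AE x in P. 0 \<le> (a - 1) * (1 - dens Q P x * exp (max (- ln (real n + 1)) (- ln (dens Q P x))))" for n
    using AE_dens_gt_0
  proof eventually_elim
    case (elim x)
    then have "dens Q P x * exp (- ln (dens Q P x)) \<le> dens Q P x * exp (max (- ln (real n + 1)) (- ln (dens Q P x)))"
      by (intro mult_left_mono) auto
    with elim assms(1) show ?case by (simp add: exp_minus mult_nonpos_nonpos)
  qed
  show "AE x in P. \<forall>\<^sub>F n in sequentially. max (- ln (real n + 1)) (- ln (dens Q P x)) = - ln (dens Q P x)"
  proof (rule AE_I2)
    show "\<forall>\<^sub>F n in sequentially. max (- ln (real n + 1)) (- ln (dens Q P x)) = - ln (dens Q P x)" for x
      using eventually_ln_Suc_ge[of "ln (dens Q P x)"] by eventually_elim simp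
  qed
qed (use assms in \<open>simp_all add: mult_neg_neg\<close>)

theorem alpha_div_eq_SUP_var_obj:
  "alpha_div a Q P = (SUP T\<in>test_functions a. ereal (var_obj a Q P T))"
proof (rule antisym)
  show "alpha_div a Q P \<le> (SUP T\<in>test_functions a. ereal (var_obj a Q P T))"
  proof (cases "integrable P (\<lambda>x. alpha_gen a (dens Q P x))")
    case True
    let ?T = "\<lambda>x. - ln (dens Q P x)"
    have T_test: "?T \<in> test_functions a"
      using True by (rule minus_ln_dens_test_function)
    have "AE x in P. dens Q P x = exp (- ?T x)"
      using AE_dens_gt_0 by eventually_elim simp
    then have "alpha_div a Q P = ereal (var_obj a Q P ?T)"
      by (rule alpha_div_eq_var_obj[OF T_test])
    also have "\<dots> \<le> (SUP T\<in>test_functions a. ereal (var_obj a Q P T))"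
      using T_test by (rule SUP_upper)
    finally show ?thesis .
  next
    case False
    then have "\<not> (0 < a \<and> a < 1)" using integrable_alpha_gen_dens by blast
    then consider "1 < a" | "a < 0" using a_ne_0 a_ne_1 by linarith
    then show ?thesis
    proof cases
      case 1
      then show ?thesis using SUP_var_obj_eq_infinity_gt_1[OF 1 False] by simp
    next
      case 2
      then show ?thesis using SUP_var_obj_eq_infinity_lt_0[OF 2 False] by simp
    qed
  qed
  show "(SUP T\<in>test_functions a. ereal (var_obj a Q P T)) \<le> alpha_div a Q P"
    by (rule SUP_least) (rule var_obj_le_alpha_div)
qed

end

end

lemma admissible_eq_test_functions:
  fixes P Q :: "'a::euclidean_space measure"
  assumes "mutually_ac_prob_spaces P Q" and "sets P = sets borel"
  shows "admissible a Q P = mutually_ac_prob_spaces.test_functions P Q a"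
proof -
  note test_functions_def = mutually_ac_prob_spaces.test_functions_def[OF assms(1)]
  have "sets Q = sets P" using assms(1) by (rule mutually_ac_prob_spaces.sets_Q)
  then have meas_P: "borel_measurable borel = borel_measurable P"
    and meas_Q: "borel_measurable borel = borel_measurable Q"
    using assms(2) by (auto intro: measurable_cong_sets)
  have "T \<in> admissible a Q P \<longleftrightarrow> T \<in> mutually_ac_prob_spaces.test_functions P Q a" for T
  proof (cases "T \<in> borel_measurable P")
    case True
    moreover have [measurable]: "T \<in> borel_measurable P" "T \<in> borel_measurable Q"
      using True unfolding meas_P[symmetric] meas_Q[symmetric] by simp_all
    moreover have "(\<lambda>x. exp ((a - 1) * T x)) \<in> borel_measurable P"
      and "(\<lambda>x. exp (a * T x)) \<in> borel_measurable Q" by measurable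
    ultimately show ?thesis
      by (simp add: admissible_def test_functions_def meas_P integrable_iff_bounded)
  qed (simp add: admissible_def test_functions_def meas_P)
  then show ?thesis by blast
qed

theorem proposition1:
  fixes P Q :: "'a::euclidean_space measure" and \<alpha> :: real
  assumes "prob_space P" and "prob_space Q"
    and "sets P = sets borel" and "sets Q = sets borel"
    and "absolutely_continuous Q P" and "absolutely_continuous P Q"
    and "\<alpha> \<noteq> 0" and "\<alpha> \<noteq> 1"
  shows "alpha_div \<alpha> Q P = (SUP T \<in> admissible \<alpha> Q P. ereal (var_obj \<alpha> Q P T)) \<and>
         (\<forall>T. T \<in> borel_measurable borel \<longrightarrow> (AE x in P. dens Q P x = exp (- T x)) \<longrightarrow>
           T \<in> admissible \<alpha> Q P \<longrightarrow> alpha_div \<alpha> Q P = ereal (var_obj \<alpha> Q P T))"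
proof -
  have "mutually_ac_prob_spaces P Q"
    using assms(1-6) by (simp add: mutually_ac_prob_spaces_def mutually_ac_prob_spaces_axioms_def)
  then interpret mutually_ac_prob_spaces P Q .
  have admissible: "admissible \<alpha> Q P = test_functions \<alpha>"
    using \<open>mutually_ac_prob_spaces P Q\<close> assms(3) by (rule admissible_eq_test_functions)
  show ?thesis
    unfolding admissible
    using alpha_div_eq_SUP_var_obj[OF assms(7,8)] alpha_div_eq_var_obj[OF assms(7,8)] by blast
qed

end
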